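(* Let $\{U_n\}_{n\ge1}$ be a $*$-submixing sequence adapted to a filtration $\{\mathcal{F}_n\}_{n\ge1}$ with $\mathbb{E}(U_n)=0$ and $\mathbb{E}(U_n^2)<\infty$ for all $n$. Let $\{b_n\}$ be positive constants increasing to $\infty$ such that $\sum_{n=1}^\infty b_n^{-2}\mathbb{E}(U_n^2)<\infty$ and $\sup_n b_n^{-1}\sum_{i=1}^n\mathbb{E}|U_i|<\infty$. Then $b_n^{-1}\sum_{i=1}^nU_i\to0$ almost surely.
   Context: A sequence $\{U_n\}_{n\ge1}$ is $*$-submixing adapted to $\{\mathcal{F}_n\}$ if $U_n$ is $\mathcal{F}_n$-measurable for each $n$ and there exist a positive integer $N$ and a non-negative function $f$ on the integers $n\ge N$ with $f(n)\to0$ as $n\to\infty$ such that for all $n\ge N$ and $m\ge1$, almost surely, $|\mathbb{E}(U_{n+m}|\mathcal{F}_m)-\mathbb{E}(U_{n+m})|\le f(n)\,\mathbb{E}|U_{n+m}|$. *)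

theory Defs
  imports "HOL-Probability.Probability"
begin

definition is_filtration :: "'a measure \<Rightarrow> (nat \<Rightarrow> 'a measure) \<Rightarrow> bool" where
  "is_filtration M F \<longleftrightarrow>
     (\<forall>n\<ge>1. subalgebra M (F n)) \<and>
     (\<forall>n m. 1 \<le> n \<longrightarrow> n \<le> m \<longrightarrow> sets (F n) \<subseteq> sets (F m))"

definition star_submixing ::
  "'a measure \<Rightarrow> (nat \<Rightarrow> 'a measure) \<Rightarrow> (nat \<Rightarrow> 'a \<Rightarrow> real) \<Rightarrow> bool" where
  "star_submixing M F U \<longleftrightarrow>
     (\<forall>n\<ge>1. U n \<in> borel_measurable (F n)) \<and>
     (\<exists>(N::nat) (f::nat \<Rightarrow> real). N \<ge> 1 \<and> (\<forall>n\<ge>N. f n \<ge> 0) \<and> f \<longlonglongrightarrow> 0 \<and>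
        (\<forall>n m. n \<ge> N \<longrightarrow> m \<ge> 1 \<longrightarrow>
           (AE x in M. \<bar>real_cond_exp M (F m) (U (n + m)) x - (\<integral>y. U (n + m) y \<partial>M)\<bar>
                        \<le> f n * (\<integral>y. \<bar>U (n + m) y\<bar> \<partial>M))))"

end

theory Submission
  imports Defs
begin

text \<open>
  Fix a lag \<open>k \<ge> N\<close> and write \<open>E\<^sub>m = E(\<cdot> | \<F>\<^sub>m)\<close>. Telescoping through the filtration gives
  \<open>U\<^sub>i = E\<^sub>i\<^sub>-\<^sub>k U\<^sub>i + \<Sum>\<^sub>j\<^sub><\<^sub>k (E\<^sub>i\<^sub>-\<^sub>j U\<^sub>i - E\<^sub>i\<^sub>-\<^sub>j\<^sub>-\<^sub>1 U\<^sub>i)\<close> for \<open>i > k\<close>. For each fixed \<open>j\<close> the increments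
  form a martingale difference sequence in \<open>i\<close> with second moments at most \<open>4 E U\<^sub>i\<^sup>2\<close>, so
  Kolmogorov's maximal inequality and Kronecker's lemma give them a strong law of large numbers.
  By the mixing condition the far projections \<open>E\<^sub>i\<^sub>-\<^sub>k U\<^sub>i\<close> are bounded by \<open>f k E|U\<^sub>i|\<close>, so their
  normalised sum is eventually at most \<open>f k\<close> times \<open>sup\<^sub>n b\<^sub>n\<^sup>-\<^sup>1 \<Sum>\<^sub>i\<^sub>\<le>\<^sub>n E|U\<^sub>i|\<close>; letting \<open>k \<rightarrow> \<infinity>\<close> finishes.
\<close>

section \<open>Kronecker's lemma\<close>

lemma sum_weighted_abs_le:
  fixes w r :: "nat \<Rightarrow> real"
  assumes w: "\<And>t. w t \<ge> 0" and small: "\<And>t. t \<ge> T \<Longrightarrow> \<bar>r t\<bar> \<le> \<epsilon>"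
  shows "\<bar>\<Sum>t<n. w t * r t\<bar> \<le> (\<Sum>t<T. w t * \<bar>r t\<bar>) + \<epsilon> * (\<Sum>t<n. w t)"
proof -
  have "\<bar>\<Sum>t<n. w t * r t\<bar> \<le> (\<Sum>t<n. (if t < T then w t * \<bar>r t\<bar> else 0) + \<epsilon> * w t)"
  proof (rule order_trans[OF sum_abs], rule sum_mono)
    fix t
    have "w t * \<bar>r t\<bar> \<le> w t * \<epsilon>" if "t \<ge> T"
      using small[OF that] w[of t] by (rule mult_left_mono)
    then show "\<bar>w t * r t\<bar> \<le> (if t < T then w t * \<bar>r t\<bar> else 0) + \<epsilon> * w t"
      using w[of t] small[of T] by (auto simp: abs_mult mult.commute)
  qed
  also have "\<dots> = (\<Sum>t\<in>{..<n} \<inter> {..<T}. w t * \<bar>r t\<bar>) + \<epsilon> * (\<Sum>t<n. w t)"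
    by (simp add: sum.distrib sum_distrib_left sum.If_cases lessThan_def)
  also have "(\<Sum>t\<in>{..<n} \<inter> {..<T}. w t * \<bar>r t\<bar>) \<le> (\<Sum>t<T. w t * \<bar>r t\<bar>)"
    using w by (intro sum_mono2) auto
  finally show ?thesis by simp
qed

lemma weighted_average_tendsto_zero:
  fixes b r :: "nat \<Rightarrow> real"
  assumes b_pos: "\<And>n. b n > 0" and "incseq b" and b_top: "filterlim b at_top sequentially"
    and "r \<longlonglongrightarrow> 0"
  shows "(\<lambda>n. (\<Sum>t<n. (b (Suc t) - b t) * r (Suc t)) / b n) \<longlonglongrightarrow> 0"
proof (rule LIMSEQ_I)
  fix \<epsilon> :: real assume "\<epsilon> > 0"
  have w: "b (Suc t) - b t \<ge> 0" for t
    using \<open>incseq b\<close> by (simp add: incseq_Suc_iff)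
  obtain T where T: "\<And>t. t \<ge> T \<Longrightarrow> \<bar>r (Suc t)\<bar> \<le> \<epsilon>/2"
    using LIMSEQ_D[OF LIMSEQ_Suc[OF \<open>r \<longlonglongrightarrow> 0\<close>], of "\<epsilon>/2"] \<open>\<epsilon> > 0\<close> by force
  define K where "K = (\<Sum>t<T. (b (Suc t) - b t) * \<bar>r (Suc t)\<bar>)"
  obtain n0 where n0: "\<And>n. n \<ge> n0 \<Longrightarrow> b n > 2 * K / \<epsilon>"
    using b_top by (auto simp: filterlim_at_top_dense eventually_sequentially)
  have "\<bar>\<Sum>t<n. (b (Suc t) - b t) * r (Suc t)\<bar> < \<epsilon> * b n" if "n \<ge> n0" for n
  proof -
    have "\<bar>\<Sum>t<n. (b (Suc t) - b t) * r (Suc t)\<bar> \<le> K + \<epsilon>/2 * (b n - b 0)"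
      using sum_weighted_abs_le[of "\<lambda>t. b (Suc t) - b t" T "\<lambda>t. r (Suc t)" "\<epsilon>/2" n] w T
      by (simp add: K_def sum_lessThan_telescope)
    moreover have "K < \<epsilon>/2 * b n"
      using n0[OF that] \<open>\<epsilon> > 0\<close> by (simp add: field_simps)
    moreover have "\<epsilon>/2 * b 0 \<ge> 0"
      using b_pos[of 0] \<open>\<epsilon> > 0\<close> by simp
    ultimately show ?thesis by (simp add: right_diff_distrib)
  qed
  then show "\<exists>n0. \<forall>n\<ge>n0. norm ((\<Sum>t<n. (b (Suc t) - b t) * r (Suc t)) / b n - 0) < \<epsilon>"
    using b_pos by (auto simp: abs_div abs_of_pos pos_divide_less_eq)
qed

lemma kronecker:
  fixes a b :: "nat \<Rightarrow> real"
  assumes b_pos: "\<And>n. b n > 0" and "incseq b" and b_top: "filterlim b at_top sequentially"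
    and summable: "summable (\<lambda>t. a t / b t)"
  shows "(\<lambda>n. (\<Sum>t\<le>n. a t) / b n) \<longlonglongrightarrow> 0"
proof -
  define r where "r n = (\<Sum>t<n. a t / b t) - (\<Sum>t. a t / b t)" for n
  have r: "r \<longlonglongrightarrow> 0"
    unfolding r_def using summable_LIMSEQ[OF summable] by (simp add: LIM_zero)
  have a_eq: "a t = b t * (r (Suc t) - r t)" for t
    using b_pos[of t] by (simp add: r_def)
  \<comment> \<open>Abel summation\<close>
  have "(\<Sum>t\<le>n. b t * (r (Suc t) - r t))
      = b n * r (Suc n) - b 0 * r 0 - (\<Sum>t<n. (b (Suc t) - b t) * r (Suc t))" for n
    by (induction n) (simp_all add: algebra_simps)
  then have eq: "(\<Sum>t\<le>n. a t) / b n
      = r (Suc n) - b 0 * r 0 / b n - (\<Sum>t<n. (b (Suc t) - b t) * r (Suc t)) / b n" for n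
    using b_pos[of n] by (simp add: a_eq diff_divide_distrib)
  have "(\<lambda>n. b 0 * r 0 / b n) \<longlonglongrightarrow> 0"
    using tendsto_mult_right_zero[OF tendsto_inverse_0_at_top[OF b_top]]
    by (simp add: divide_inverse)
  from tendsto_diff[OF tendsto_diff[OF LIMSEQ_Suc[OF r] this]
      weighted_average_tendsto_zero[OF b_pos \<open>incseq b\<close> b_top r]]
  show ?thesis
    unfolding eq by simp
qed

section \<open>Square-integrable functions and conditional expectations\<close>

lemma integrable_mult_of_square_integrable:
  fixes f g :: "'a \<Rightarrow> real"
  assumes "f \<in> borel_measurable M" "g \<in> borel_measurable M"
    and "integrable M (\<lambda>x. (f x)\<^sup>2)" "integrable M (\<lambda>x. (g x)\<^sup>2)"
  shows "integrable M (\<lambda>x. f x * g x)"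
proof (rule Bochner_Integration.integrable_bound[where f="\<lambda>x. (f x)\<^sup>2 + (g x)\<^sup>2"])
  show "AE x in M. norm (f x * g x) \<le> norm ((f x)\<^sup>2 + (g x)\<^sup>2)"
  proof (intro AE_I2)
    fix x
    have "2 * \<bar>f x\<bar> * \<bar>g x\<bar> \<le> (f x)\<^sup>2 + (g x)\<^sup>2"
      using sum_squares_bound[of "\<bar>f x\<bar>" "\<bar>g x\<bar>"] by simp
    then show "norm (f x * g x) \<le> norm ((f x)\<^sup>2 + (g x)\<^sup>2)"
      unfolding real_norm_def abs_mult
      using abs_ge_self[of "(f x)\<^sup>2 + (g x)\<^sup>2"] mult_nonneg_nonneg[OF abs_ge_zero abs_ge_zero, of "f x" "g x"]
      by linarith
  qed
qed (use assms in auto)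

lemma integrable_square_add:
  fixes f g :: "'a \<Rightarrow> real"
  assumes "f \<in> borel_measurable M" "g \<in> borel_measurable M"
    and "integrable M (\<lambda>x. (f x)\<^sup>2)" "integrable M (\<lambda>x. (g x)\<^sup>2)"
  shows "integrable M (\<lambda>x. (f x + g x)\<^sup>2)"
  using integrable_mult_of_square_integrable[OF assms] assms
  by (simp add: power2_sum mult.assoc)

lemma integrable_square_diff:
  fixes f g :: "'a \<Rightarrow> real"
  assumes "f \<in> borel_measurable M" "g \<in> borel_measurable M"
    and "integrable M (\<lambda>x. (f x)\<^sup>2)" "integrable M (\<lambda>x. (g x)\<^sup>2)"
  shows "integrable M (\<lambda>x. (f x - g x)\<^sup>2)"
  using integrable_square_add[of f M "\<lambda>x. - g x"] assms by simp

lemma integrable_square_sum: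
  fixes f :: "'i \<Rightarrow> 'a \<Rightarrow> real"
  assumes "\<And>i. i \<in> I \<Longrightarrow> f i \<in> borel_measurable M"
    and "\<And>i. i \<in> I \<Longrightarrow> integrable M (\<lambda>x. (f i x)\<^sup>2)"
  shows "integrable M (\<lambda>x. (\<Sum>i\<in>I. f i x)\<^sup>2)"
  using assms
  by (induction I rule: infinite_finite_induct) (simp_all add: integrable_square_add)

lemma (in prob_space) sigma_finite_subalgebra:
  "subalgebra M F \<Longrightarrow> sigma_finite_subalgebra M F"
  by (simp add: finite_measure_subalgebra.intro finite_measure_subalgebra_axioms.intro
      finite_measure_subalgebra_is_sigma_finite finite_measure_axioms)

lemma (in sigma_finite_subalgebra) integral_mult_eq_0_if_cond_exp_eq_0:
  assumes "Y \<in> borel_measurable F" "d \<in> borel_measurable M"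
    and "integrable M (\<lambda>x. Y x * d x)"
    and "AE x in M. real_cond_exp M F d x = 0"
  shows "(\<integral>x. Y x * d x \<partial>M) = 0"
proof -
  have "(\<integral>x. Y x * d x \<partial>M) = (\<integral>x. Y x * real_cond_exp M F d x \<partial>M)"
    using real_cond_exp_intg(2)[OF assms(3,1,2)] by simp
  also have "\<dots> = (\<integral>x. 0 \<partial>M)"
    using assms(4) measurable_from_subalg[OF subalg assms(1)]
    by (intro integral_cong_AE) auto
  finally show ?thesis
    by simp
qed

lemma (in prob_space) cond_exp_square_integrable:
  fixes X :: "'a \<Rightarrow> real"
  assumes "subalgebra M F" "X \<in> borel_measurable M" "integrable M (\<lambda>x. (X x)\<^sup>2)"
  shows "integrable M (\<lambda>x. (real_cond_exp M F X x)\<^sup>2)"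
    and "(\<integral>x. (real_cond_exp M F X x)\<^sup>2 \<partial>M) \<le> (\<integral>x. (X x)\<^sup>2 \<partial>M)"
proof -
  interpret sigma_finite_subalgebra M F
    by (rule sigma_finite_subalgebra[OF assms(1)])
  have X: "integrable M X"
    by (rule square_integrable_imp_integrable[OF assms(2,3)])
  have convex: "convex_on UNIV (\<lambda>x::real. x\<^sup>2)"
    using convex_power2 by simp
  show square: "integrable M (\<lambda>x. (real_cond_exp M F X x)\<^sup>2)"
    using integrable_convex_cond_exp[OF X _ _ assms(3) convex, of 0 0] by simp
  have "AE x in M. (real_cond_exp M F X x)\<^sup>2 \<le> real_cond_exp M F (\<lambda>x. (X x)\<^sup>2) x"
    using real_cond_exp_jensens_inequality(2)[OF X _ _ assms(3) convex, of 0 0] by simp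
  then have "(\<integral>x. (real_cond_exp M F X x)\<^sup>2 \<partial>M) \<le> (\<integral>x. real_cond_exp M F (\<lambda>x. (X x)\<^sup>2) x \<partial>M)"
    by (intro integral_mono_AE square real_cond_exp_int(1) assms(3))
  also have "\<dots> = (\<integral>x. (X x)\<^sup>2 \<partial>M)"
    by (rule real_cond_exp_int(2)[OF assms(3)])
  finally show "(\<integral>x. (real_cond_exp M F X x)\<^sup>2 \<partial>M) \<le> (\<integral>x. (X x)\<^sup>2 \<partial>M)" .
qed

lemma (in prob_space) integral_cond_exp_diff_square_le:
  fixes X :: "'a \<Rightarrow> real"
  assumes "subalgebra M F" "subalgebra M F'"
    and "X \<in> borel_measurable M" "integrable M (\<lambda>x. (X x)\<^sup>2)"
  defines "D \<equiv> \<lambda>x. real_cond_exp M F X x - real_cond_exp M F' X x"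
  shows "integrable M (\<lambda>x. (D x)\<^sup>2)" and "(\<integral>x. (D x)\<^sup>2 \<partial>M) \<le> 4 * (\<integral>x. (X x)\<^sup>2 \<partial>M)"
proof -
  note F = cond_exp_square_integrable[OF assms(1,3,4)]
    and F' = cond_exp_square_integrable[OF assms(2,3,4)]
  show "integrable M (\<lambda>x. (D x)\<^sup>2)"
    unfolding D_def by (intro integrable_square_diff F(1) F'(1) borel_measurable_cond_exp2)
  have "(D x)\<^sup>2 \<le> 2 * (real_cond_exp M F X x)\<^sup>2 + 2 * (real_cond_exp M F' X x)\<^sup>2" for x
    using zero_le_power2[of "real_cond_exp M F X x + real_cond_exp M F' X x"]
    by (simp add: D_def power2_eq_square algebra_simps)
  then have "(\<integral>x. (D x)\<^sup>2 \<partial>M)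
      \<le> (\<integral>x. 2 * (real_cond_exp M F X x)\<^sup>2 + 2 * (real_cond_exp M F' X x)\<^sup>2 \<partial>M)"
    using F(1) F'(1) \<open>integrable M (\<lambda>x. (D x)\<^sup>2)\<close> by (intro integral_mono) auto
  also have "\<dots> = 2 * (\<integral>x. (real_cond_exp M F X x)\<^sup>2 \<partial>M)
      + 2 * (\<integral>x. (real_cond_exp M F' X x)\<^sup>2 \<partial>M)"
    using F(1) F'(1) by simp
  also have "\<dots> \<le> 4 * (\<integral>x. (X x)\<^sup>2 \<partial>M)"
    using F(2) F'(2) by linarith
  finally show "(\<integral>x. (D x)\<^sup>2 \<partial>M) \<le> 4 * (\<integral>x. (X x)\<^sup>2 \<partial>M)" .
qed

lemma (in prob_space) cond_exp_cond_exp_diff_eq_0: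
  fixes X :: "'a \<Rightarrow> real"
  assumes "subalgebra M F'" "subalgebra F' F" "integrable M X"
  shows "AE x in M. real_cond_exp M F (\<lambda>x. real_cond_exp M F' X x - real_cond_exp M F X x) x = 0"
proof -
  have "subalgebra M F"
    using assms(1,2) by (auto simp: subalgebra_def)
  interpret sigma_finite_subalgebra M F
    by (rule sigma_finite_subalgebra[OF \<open>subalgebra M F\<close>])
  have "integrable M (real_cond_exp M F' X)"
    by (intro sigma_finite_subalgebra.real_cond_exp_int(1) sigma_finite_subalgebra assms(1,3))
  then have "AE x in M. real_cond_exp M F (\<lambda>x. real_cond_exp M F' X x - real_cond_exp M F X x) x
      = real_cond_exp M F (real_cond_exp M F' X) x - real_cond_exp M F (real_cond_exp M F X) x"
    by (intro real_cond_exp_diff real_cond_exp_int(1) assms(3))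
  moreover have "AE x in M. real_cond_exp M F (real_cond_exp M F' X) x = real_cond_exp M F X x"
    by (rule real_cond_exp_nested_subalg[OF assms])
  moreover have "AE x in M. real_cond_exp M F (real_cond_exp M F X) x = real_cond_exp M F X x"
    by (intro real_cond_exp_F_meas real_cond_exp_int(1) assms(3)) simp
  ultimately show ?thesis
    by eventually_elim simp
qed

section \<open>Martingale difference sequences\<close>

lemma convergent_if_tails_small:
  fixes s :: "nat \<Rightarrow> real"
  assumes small: "\<And>q::nat. \<exists>m. \<forall>l. \<bar>s (l + m) - s m\<bar> < 1 / Suc q"
  shows "convergent s"
proof -
  have "Cauchy s"
  proof (rule CauchyI)
    fix e :: real
    assume "e > 0"
    obtain q :: nat where q: "1 / Suc q < e / 2"
      using reals_Archimedean[of "e/2"] \<open>e > 0\<close> by (auto simp: inverse_eq_divide)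
    obtain m where m: "\<And>l. \<bar>s (l + m) - s m\<bar> < 1 / Suc q"
      using small by blast
    have half: "\<bar>s a - s m\<bar> < e / 2" if "a \<ge> m" for a
      using m[of "a - m"] q that by simp
    have "\<bar>s a - s b\<bar> < e" if "a \<ge> m" "b \<ge> m" for a b
      using half[OF that(1)] half[OF that(2)] by (simp only: abs_less_iff) linarith
    then show "\<exists>M. \<forall>a\<ge>M. \<forall>b\<ge>M. norm (s a - s b) < e"
      by auto
  qed
  then show ?thesis
    by (simp add: Cauchy_convergent_iff)
qed

text \<open>Only the increments \<open>d (Suc i)\<close> are required to be centred given the past; \<open>d 0\<close> is arbitrary.\<close>

locale martingale_difference = prob_space M for M :: "'a measure" +
  fixes G :: "nat \<Rightarrow> 'a measure" and d :: "nat \<Rightarrow> 'a \<Rightarrow> real"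
  assumes subalgebra: "\<And>i. subalgebra M (G i)"
    and sets_mono: "\<And>i. sets (G i) \<subseteq> sets (G (Suc i))"
    and adapted: "\<And>i. d i \<in> borel_measurable (G i)"
    and square_integrable: "\<And>i. integrable M (\<lambda>x. (d i x)\<^sup>2)"
    and cond_exp_eq_0: "\<And>i. AE x in M. real_cond_exp M (G i) (d (Suc i)) x = 0"
begin

definition partial_sum :: "nat \<Rightarrow> 'a \<Rightarrow> real" where
  "partial_sum n x = (\<Sum>i<n. d i x)"

lemma space_G: "space (G i) = space M"
  using subalgebra[of i] by (simp add: subalgebra_def)

lemma measurable_G_mono:
  assumes "f \<in> borel_measurable (G i)" "i \<le> j"
  shows "f \<in> borel_measurable (G j)"
proof (rule measurable_from_subalg[OF _ assms(1)])
  show "subalgebra (G j) (G i)"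
    using lift_Suc_mono_le[of "\<lambda>i. sets (G i)", OF sets_mono assms(2)]
    by (simp add: subalgebra_def space_G)
qed

lemma measurable_G_imp_M: "f \<in> borel_measurable (G i) \<Longrightarrow> f \<in> borel_measurable M"
  by (rule measurable_from_subalg[OF subalgebra])

lemma d_measurable [measurable]: "d i \<in> borel_measurable M"
  by (rule measurable_G_imp_M[OF adapted])

lemma partial_sum_adapted: "l \<le> Suc j \<Longrightarrow> partial_sum l \<in> borel_measurable (G j)"
  unfolding partial_sum_def
  by (intro borel_measurable_sum) (auto intro: measurable_G_mono[OF adapted])

lemma partial_sum_measurable [measurable]: "partial_sum l \<in> borel_measurable M"
  by (rule measurable_G_imp_M[OF partial_sum_adapted[of l l]]) simp

lemma partial_sum_square_integrable: "integrable M (\<lambda>x. (partial_sum l x)\<^sup>2)"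
  unfolding partial_sum_def by (rule integrable_square_sum) (auto simp: square_integrable)

lemma partial_sum_diff:
  "l \<le> n \<Longrightarrow> partial_sum n x - partial_sum l x = (\<Sum>i\<in>{l..<n}. d i x)"
  unfolding partial_sum_def lessThan_atLeast0
  by (simp add: sum.atLeastLessThan_concat[symmetric, of 0 l n])

lemma integral_mult_eq_0:
  assumes "Y \<in> borel_measurable (G j)" "integrable M (\<lambda>x. (Y x)\<^sup>2)" "j < i"
  shows "(\<integral>x. Y x * d i x \<partial>M) = 0"
proof -
  obtain k where i: "i = Suc k" and "j \<le> k"
    using assms(3) by (cases i) auto
  interpret sigma_finite_subalgebra M "G k"
    by (rule sigma_finite_subalgebra[OF subalgebra])
  show ?thesis
    unfolding i
    using measurable_G_mono[OF assms(1) \<open>j \<le> k\<close>] measurable_G_imp_M[OF assms(1)]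
    by (intro integral_mult_eq_0_if_cond_exp_eq_0 cond_exp_eq_0 d_measurable
        integrable_mult_of_square_integrable assms(2) square_integrable)
qed

lemma integral_mult_partial_sum_diff_eq_0:
  assumes "Y \<in> borel_measurable (G j)" "integrable M (\<lambda>x. (Y x)\<^sup>2)" "j < l" "l \<le> n"
  shows "(\<integral>x. Y x * (partial_sum n x - partial_sum l x) \<partial>M) = 0"
proof -
  have Y: "Y \<in> borel_measurable M"
    by (rule measurable_G_imp_M[OF assms(1)])
  have "(\<integral>x. Y x * (partial_sum n x - partial_sum l x) \<partial>M)
      = (\<Sum>i\<in>{l..<n}. (\<integral>x. Y x * d i x \<partial>M))"
    using assms(4) integrable_mult_of_square_integrable[OF Y d_measurable assms(2) square_integrable]
    by (simp add: partial_sum_diff sum_distrib_left)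
  also have "\<dots> = 0"
    using integral_mult_eq_0[OF assms(1,2)] assms(3) by simp
  finally show ?thesis .
qed

lemma integral_partial_sum_square:
  "(\<integral>x. (partial_sum n x)\<^sup>2 \<partial>M) = (\<Sum>i<n. (\<integral>x. (d i x)\<^sup>2 \<partial>M))"
proof (induction n)
  case (Suc n)
  have "(\<integral>x. partial_sum n x * d n x \<partial>M) = 0"
  proof (cases n)
    case (Suc k)
    then show ?thesis
      by (intro integral_mult_eq_0[of _ k] partial_sum_adapted partial_sum_square_integrable) auto
  qed (simp add: partial_sum_def)
  moreover have "(partial_sum (Suc n) x)\<^sup>2
      = (partial_sum n x)\<^sup>2 + 2 * (partial_sum n x * d n x) + (d n x)\<^sup>2" for x
    by (simp add: partial_sum_def power2_sum)
  moreover have "integrable M (\<lambda>x. partial_sum n x * d n x)"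
    by (intro integrable_mult_of_square_integrable partial_sum_square_integrable
        square_integrable partial_sum_measurable d_measurable)
  ultimately show ?case
    using Suc partial_sum_square_integrable square_integrable by simp
qed (simp add: partial_sum_def)

lemma sets_G_subset: "sets (G i) \<subseteq> sets M"
  using subalgebra[of i] by (simp add: subalgebra_def)

lemma integrable_indicator_partial_sum_square:
  "A \<in> sets M \<Longrightarrow> integrable M (\<lambda>x. indicator A x * (partial_sum l x)\<^sup>2)"
  using integrable_real_mult_indicator[OF _ partial_sum_square_integrable]
  by (simp add: mult.commute)

lemma integral_indicator_partial_sum_square_mono:
  assumes A: "A \<in> sets (G k)" and "Suc k \<le> n"
  shows "(\<integral>x. indicator A x * (partial_sum (Suc k) x)\<^sup>2 \<partial>M)
       \<le> (\<integral>x. indicator A x * (partial_sum n x)\<^sup>2 \<partial>M)"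
proof -
  let ?S = partial_sum and ?l = "Suc k"
  define Y where "Y x = indicator A x * ?S ?l x" for x
  have A_M: "A \<in> sets M"
    using A sets_G_subset by blast
  have Y: "Y \<in> borel_measurable (G k)"
    unfolding Y_def using A partial_sum_adapted[of ?l k] by measurable
  have "(\<lambda>x. (Y x)\<^sup>2) = (\<lambda>x. indicator A x * (?S ?l x)\<^sup>2)"
    by (auto simp: Y_def indicator_def power2_eq_square)
  then have Y_square: "integrable M (\<lambda>x. (Y x)\<^sup>2)"
    using integrable_indicator_partial_sum_square[OF A_M] by simp
  have cross: "integrable M (\<lambda>x. Y x * (?S n x - ?S ?l x))"
    by (intro integrable_mult_of_square_integrable measurable_G_imp_M[OF Y] Y_square
        integrable_square_diff partial_sum_square_integrable) measurable
  have "(\<integral>x. indicator A x * (?S ?l x)\<^sup>2 \<partial>M)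
      = (\<integral>x. indicator A x * (?S ?l x)\<^sup>2 + 2 * (Y x * (?S n x - ?S ?l x)) \<partial>M)"
    using integrable_indicator_partial_sum_square[OF A_M] cross
      integral_mult_partial_sum_diff_eq_0[OF Y Y_square _ \<open>Suc k \<le> n\<close>]
    by simp
  also have "\<dots> \<le> (\<integral>x. indicator A x * (?S n x)\<^sup>2 \<partial>M)"
  proof (rule integral_mono)
    fix x
    have "indicator A x * (?S n x)\<^sup>2 - (indicator A x * (?S ?l x)\<^sup>2 + 2 * (Y x * (?S n x - ?S ?l x)))
        = indicator A x * (?S n x - ?S ?l x)\<^sup>2"
      by (simp add: Y_def power2_eq_square algebra_simps)
    moreover have "0 \<le> indicator A x * (?S n x - ?S ?l x)\<^sup>2"
      by simp
    ultimately show "indicator A x * (?S ?l x)\<^sup>2 + 2 * (Y x * (?S n x - ?S ?l x))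
        \<le> indicator A x * (?S n x)\<^sup>2"
      by linarith
  qed (use integrable_indicator_partial_sum_square[OF A_M] cross in auto)
  finally show ?thesis .
qed

definition first_exceedance :: "real \<Rightarrow> nat \<Rightarrow> 'a set" where
  "first_exceedance e l =
     {x \<in> space M. e \<le> \<bar>partial_sum l x\<bar> \<and> (\<forall>r<l. \<bar>partial_sum r x\<bar> < e)}"

lemma first_exceedance_Suc_in_sets: "first_exceedance e (Suc k) \<in> sets (G k)"
proof -
  have [measurable]: "partial_sum (Suc k) \<in> borel_measurable (G k)"
    by (rule partial_sum_adapted) simp
  have "first_exceedance e (Suc k)
      = {x \<in> space (G k). e \<le> \<bar>partial_sum (Suc k) x\<bar>}
        \<inter> {x \<in> space (G k). \<forall>r\<in>{..<Suc k}. \<bar>partial_sum r x\<bar> < e}"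
    by (auto simp: first_exceedance_def space_G)
  moreover have "{x \<in> space (G k). e \<le> \<bar>partial_sum (Suc k) x\<bar>} \<in> sets (G k)"
    by measurable
  moreover have "{x \<in> space (G k). \<forall>r\<in>{..<Suc k}. \<bar>partial_sum r x\<bar> < e} \<in> sets (G k)"
  proof (rule sets.sets_Collect_finite_All)
    fix r assume "r \<in> {..<Suc k}"
    then have [measurable]: "partial_sum r \<in> borel_measurable (G k)"
      by (intro partial_sum_adapted) auto
    show "{x \<in> space (G k). \<bar>partial_sum r x\<bar> < e} \<in> sets (G k)"
      by measurable
  qed simp
  ultimately show ?thesis
    by simp
qed

lemma first_exceedance_in_sets: "first_exceedance e l \<in> sets M"
proof (cases l)
  case 0
  then have "first_exceedance e l = {x \<in> space M. e \<le> 0}"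
    by (simp add: first_exceedance_def partial_sum_def)
  then show ?thesis
    by simp
next
  case (Suc k)
  then show ?thesis
    using first_exceedance_Suc_in_sets sets_G_subset by blast
qed

lemma disjoint_family_first_exceedance: "disjoint_family (first_exceedance e)"
  unfolding disjoint_family_on_def
proof (intro ballI impI)
  fix l l' :: nat
  assume "l \<noteq> l'"
  then consider "l < l'" | "l' < l"
    by linarith
  then show "first_exceedance e l \<inter> first_exceedance e l' = {}"
    by cases (auto simp: first_exceedance_def)
qed

lemma exceedance_eq_UN_first_exceedance:
  "{x \<in> space M. \<exists>l\<le>n. e \<le> \<bar>partial_sum l x\<bar>} = (\<Union>l\<le>n. first_exceedance e l)"
proof (intro equalityI subsetI)
  fix x
  assume "x \<in> {x \<in> space M. \<exists>l\<le>n. e \<le> \<bar>partial_sum l x\<bar>}"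
  then obtain l where "l \<le> n" "e \<le> \<bar>partial_sum l x\<bar>" and x: "x \<in> space M"
    by auto
  define l0 where "l0 = (LEAST l. e \<le> \<bar>partial_sum l x\<bar>)"
  have "e \<le> \<bar>partial_sum l0 x\<bar>" "l0 \<le> l" "\<forall>r<l0. \<bar>partial_sum r x\<bar> < e"
    unfolding l0_def using \<open>e \<le> \<bar>partial_sum l x\<bar>\<close>
    by (auto intro: LeastI Least_le dest: not_less_Least)
  then show "x \<in> (\<Union>l\<le>n. first_exceedance e l)"
    using \<open>l \<le> n\<close> x by (auto simp: first_exceedance_def)
qed (auto simp: first_exceedance_def)

lemma first_exceedance_bound:
  assumes "e > 0" "l \<le> n"
  shows "e\<^sup>2 * prob (first_exceedance e l)
       \<le> (\<integral>x. indicator (first_exceedance e l) x * (partial_sum n x)\<^sup>2 \<partial>M)"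
proof (cases l)
  case 0
  then show ?thesis
    using \<open>e > 0\<close> by (simp add: first_exceedance_def partial_sum_def)
next
  case (Suc k)
  let ?A = "first_exceedance e l"
  have "e\<^sup>2 * prob ?A = (\<integral>x. indicator ?A x * e\<^sup>2 \<partial>M)"
    using first_exceedance_in_sets by simp
  also have "\<dots> \<le> (\<integral>x. indicator ?A x * (partial_sum l x)\<^sup>2 \<partial>M)"
  proof (rule integral_mono)
    fix x
    have "e\<^sup>2 \<le> (partial_sum l x)\<^sup>2" if "x \<in> ?A"
      using that \<open>e > 0\<close> power_mono[of e "\<bar>partial_sum l x\<bar>" 2]
      by (simp add: first_exceedance_def)
    then show "indicator ?A x * e\<^sup>2 \<le> indicator ?A x * (partial_sum l x)\<^sup>2"
      by (simp add: indicator_def)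
  qed (use first_exceedance_in_sets integrable_indicator_partial_sum_square in
        \<open>auto simp: emeasure_eq_measure\<close>)
  also have "\<dots> \<le> (\<integral>x. indicator ?A x * (partial_sum n x)\<^sup>2 \<partial>M)"
    unfolding Suc
    by (rule integral_indicator_partial_sum_square_mono[OF first_exceedance_Suc_in_sets])
      (use Suc \<open>l \<le> n\<close> in simp)
  finally show ?thesis .
qed

theorem kolmogorov_maximal_inequality:
  assumes "e > 0"
  shows "prob {x \<in> space M. \<exists>l\<le>n. e \<le> \<bar>partial_sum l x\<bar>}
       \<le> (\<Sum>i<n. (\<integral>x. (d i x)\<^sup>2 \<partial>M)) / e\<^sup>2"
proof -
  let ?A = "first_exceedance e"
  have "e\<^sup>2 * prob (\<Union>l\<le>n. ?A l) = (\<Sum>l\<le>n. e\<^sup>2 * prob (?A l))"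
    using finite_measure_finite_Union[of "{..n}" ?A] first_exceedance_in_sets
      disjoint_family_on_mono[OF _ disjoint_family_first_exceedance]
    by (simp add: sum_distrib_left image_subset_iff)
  also have "\<dots> \<le> (\<Sum>l\<le>n. (\<integral>x. indicator (?A l) x * (partial_sum n x)\<^sup>2 \<partial>M))"
    by (intro sum_mono first_exceedance_bound \<open>e > 0\<close>) simp
  also have "\<dots> = (\<integral>x. indicator (\<Union>l\<le>n. ?A l) x * (partial_sum n x)\<^sup>2 \<partial>M)"
  proof -
    have indicator_UN: "indicator (\<Union>l\<le>n. ?A l) x = (\<Sum>l\<le>n. indicator (?A l) x :: real)" for x
      by (rule indicator_UN_disjoint) (auto intro: disjoint_family_on_mono[OF _ disjoint_family_first_exceedance])
    show ?thesis
      unfolding indicator_UN sum_distrib_right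
      by (intro Bochner_Integration.integral_sum[symmetric]
          integrable_indicator_partial_sum_square first_exceedance_in_sets)
  qed
  also have "\<dots> \<le> (\<integral>x. (partial_sum n x)\<^sup>2 \<partial>M)"
    using integrable_indicator_partial_sum_square[of "\<Union>l\<le>n. ?A l"] first_exceedance_in_sets
      partial_sum_square_integrable
    by (intro integral_mono) (auto simp: indicator_def)
  finally show ?thesis
    using \<open>e > 0\<close>
    by (simp add: exceedance_eq_UN_first_exceedance integral_partial_sum_square field_simps)
qed

lemma martingale_difference_shift: "martingale_difference M (\<lambda>i. G (i + m)) (\<lambda>i. d (i + m))"
  by unfold_locales (use subalgebra adapted square_integrable cond_exp_eq_0 in \<open>auto simp: sets_mono\<close>)

lemma partial_sum_shift:
  "martingale_difference.partial_sum (\<lambda>i. d (i + m)) l x = partial_sum (l + m) x - partial_sum m x"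
proof -
  have "partial_sum (l + m) x - partial_sum m x = (\<Sum>i\<in>{m..<l + m}. d i x)"
    by (rule partial_sum_diff) simp
  also have "\<dots> = (\<Sum>i<l. d (i + m) x)"
    by (rule sum.reindex_bij_witness[where j="\<lambda>i. i - m" and i="\<lambda>i. i + m"]) auto
  finally show ?thesis
    by (simp add: martingale_difference.partial_sum_def[OF martingale_difference_shift])
qed

lemma tail_exceedance_bound:
  assumes "e > 0" and summable: "summable (\<lambda>i. (\<integral>x. (d i x)\<^sup>2 \<partial>M))"
  shows "prob {x \<in> space M. \<exists>l. e \<le> \<bar>partial_sum (l + m) x - partial_sum m x\<bar>}
     \<le> (\<Sum>i. (\<integral>x. (d (i + m) x)\<^sup>2 \<partial>M)) / e\<^sup>2"
proof -
  let ?v = "\<lambda>i. (\<integral>x. (d (i + m) x)\<^sup>2 \<partial>M)"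
  define B where "B n = {x \<in> space M. \<exists>l\<le>n. e \<le> \<bar>partial_sum (l + m) x - partial_sum m x\<bar>}" for n
  have B_sets: "B n \<in> sets M" for n
  proof -
    have "B n = (\<Union>l\<le>n. {x \<in> space M. e \<le> \<bar>partial_sum (l + m) x - partial_sum m x\<bar>})"
      by (auto simp: B_def)
    then show ?thesis
      by simp
  qed
  have "summable ?v"
    using summable_ignore_initial_segment[OF summable, of m] by simp
  have "prob (B n) \<le> (\<Sum>i. ?v i) / e\<^sup>2" for n
  proof -
    have "prob (B n) \<le> (\<Sum>i<n. ?v i) / e\<^sup>2"
      using martingale_difference.kolmogorov_maximal_inequality[OF martingale_difference_shift[of m] \<open>e > 0\<close>, of n]
      by (simp add: partial_sum_shift B_def)
    also have "\<dots> \<le> (\<Sum>i. ?v i) / e\<^sup>2"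
      using sum_le_suminf[OF \<open>summable ?v\<close>, of "{..<n}"] by (simp add: divide_right_mono)
    finally show ?thesis .
  qed
  moreover have "(\<lambda>n. prob (B n)) \<longlonglongrightarrow> prob (\<Union>n. B n)"
    using B_sets by (intro finite_Lim_measure_incseq) (auto simp: incseq_def B_def intro: le_trans)
  ultimately have "prob (\<Union>n. B n) \<le> (\<Sum>i. ?v i) / e\<^sup>2"
    by (intro LIMSEQ_le_const2) auto
  moreover have "(\<Union>n. B n) = {x \<in> space M. \<exists>l. e \<le> \<bar>partial_sum (l + m) x - partial_sum m x\<bar>}"
    by (auto simp: B_def)
  ultimately show ?thesis
    by simp
qed

lemma AE_partial_sum_convergent:
  assumes summable: "summable (\<lambda>i. (\<integral>x. (d i x)\<^sup>2 \<partial>M))"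
  shows "AE x in M. convergent (\<lambda>n. partial_sum n x)"
proof -
  let ?tail = "\<lambda>m. \<Sum>i. (\<integral>x. (d (i + m) x)\<^sup>2 \<partial>M)"
  have tail: "?tail \<longlonglongrightarrow> 0"
    using suminf_exist_split[OF _ summable] by (intro LIMSEQ_I) auto
  define N where
    "N q = {x \<in> space M. \<forall>m. \<exists>l. 1 / Suc q \<le> \<bar>partial_sum (l + m) x - partial_sum m x\<bar>}"
    for q :: nat
  have "N q \<in> null_sets M" for q
  proof -
    have N_sets: "N q \<in> sets M"
      unfolding N_def by measurable
    have "prob (N q) \<le> ?tail m / (1 / Suc q)\<^sup>2" for m
      using finite_measure_mono[of "N q" "{x \<in> space M. \<exists>l. 1 / Suc q \<le> \<bar>partial_sum (l + m) x - partial_sum m x\<bar>}"]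
        tail_exceedance_bound[OF _ summable, of "1 / Suc q" m]
      by (fastforce simp: N_def)
    moreover have "(\<lambda>m. ?tail m / (1 / Suc q)\<^sup>2) \<longlonglongrightarrow> 0"
      by (rule tendsto_divide_zero[OF tail])
    ultimately have "prob (N q) \<le> 0"
      by (intro LIMSEQ_le_const[of "\<lambda>m. ?tail m / (1 / Suc q)\<^sup>2"]) auto
    then show ?thesis
      using N_sets measure_nonneg[of M "N q"] by (auto simp: emeasure_eq_measure)
  qed
  moreover have "{x \<in> space M. \<not> convergent (\<lambda>n. partial_sum n x)} \<subseteq> (\<Union>q. N q)"
  proof
    fix x
    assume "x \<in> {x \<in> space M. \<not> convergent (\<lambda>n. partial_sum n x)}"
    then show "x \<in> (\<Union>q. N q)"
      using convergent_if_tails_small[of "\<lambda>n. partial_sum n x"] by (force simp: N_def not_le)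
  qed
  ultimately show ?thesis
    by (intro AE_I'[of "\<Union>q. N q"]) auto
qed

lemma martingale_difference_scaled: "martingale_difference M G (\<lambda>i x. d i x / c i)"
proof
  fix i
  interpret sigma_finite_subalgebra M "G i"
    by (rule sigma_finite_subalgebra[OF subalgebra])
  have "integrable M (d (Suc i))"
    by (rule square_integrable_imp_integrable[OF d_measurable square_integrable])
  from real_cond_exp_cdiv[OF this, of "c (Suc i)"] cond_exp_eq_0[of i]
  show "AE x in M. real_cond_exp M (G i) (\<lambda>x. d (Suc i) x / c (Suc i)) x = 0"
    by eventually_elim simp
qed (use subalgebra sets_mono adapted square_integrable in \<open>auto simp: power_divide\<close>)

theorem strong_law:
  assumes "\<And>n. \<beta> n > 0" "incseq \<beta>" "filterlim \<beta> at_top sequentially"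
    and summable: "summable (\<lambda>i. (\<integral>x. (d i x)\<^sup>2 \<partial>M) / (\<beta> i)\<^sup>2)"
  shows "AE x in M. (\<lambda>n. (\<Sum>i\<le>n. d i x) / \<beta> n) \<longlonglongrightarrow> 0"
proof -
  interpret scaled: martingale_difference M G "\<lambda>i x. d i x / \<beta> i"
    by (rule martingale_difference_scaled)
  have "AE x in M. convergent (\<lambda>n. scaled.partial_sum n x)"
    using summable by (intro scaled.AE_partial_sum_convergent) (simp add: power_divide)
  then show ?thesis
  proof eventually_elim
    case (elim x)
    then have "summable (\<lambda>i. d i x / \<beta> i)"
      by (simp add: scaled.partial_sum_def summable_iff_convergent)
    then show ?case
      by (rule kronecker[OF assms(1-3)])
  qed
qed

end

section \<open>Decomposition into martingale increments and far projections\<close>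

lemma tendsto_zero_by_approximation:
  fixes s e :: "nat \<Rightarrow> real" and r :: "nat \<Rightarrow> nat \<Rightarrow> real"
  assumes r: "\<And>k. k \<ge> K \<Longrightarrow> r k \<longlonglongrightarrow> 0"
    and approx: "\<And>k. k \<ge> K \<Longrightarrow> eventually (\<lambda>n. \<bar>s n - r k n\<bar> \<le> e k) sequentially"
    and e: "e \<longlonglongrightarrow> 0"
  shows "s \<longlonglongrightarrow> 0"
proof (rule LIMSEQ_I)
  fix \<epsilon> :: real
  assume "\<epsilon> > 0"
  obtain k0 where k0: "\<And>k. k \<ge> k0 \<Longrightarrow> \<bar>e k\<bar> < \<epsilon>/2"
    using LIMSEQ_D[OF e, of "\<epsilon>/2"] \<open>\<epsilon> > 0\<close> by auto
  define k where "k = max k0 K"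
  have "r k \<longlonglongrightarrow> 0"
    using r by (simp add: k_def)
  then have "eventually (\<lambda>n. \<bar>r k n\<bar> < \<epsilon>/2) sequentially"
    using tendsto_iff[THEN iffD1, rule_format, of "r k" 0 sequentially "\<epsilon>/2"] \<open>\<epsilon> > 0\<close>
    by (simp add: dist_real_def)
  moreover have "eventually (\<lambda>n. \<bar>s n - r k n\<bar> \<le> e k) sequentially"
    using approx by (simp add: k_def)
  ultimately have "eventually (\<lambda>n. \<bar>s n\<bar> < \<epsilon>) sequentially"
    by eventually_elim (use k0[of k] in \<open>auto simp: k_def\<close>)
  then show "\<exists>n0. \<forall>n\<ge>n0. norm (s n - 0) < \<epsilon>"
    by (simp add: eventually_sequentially)
qed

lemma sum_atLeastAtMost_split_shift:
  fixes g :: "nat \<Rightarrow> 'b::comm_monoid_add"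
  shows "(\<Sum>i=1..p + k + 1. g i) = (\<Sum>i=1..k. g i) + (\<Sum>t\<le>p. g (t + k + 1))"
  by (induction p) (simp_all add: sum.cl_ivl_Suc ac_simps)

text \<open>
  Here \<open>c m i\<close> stands for \<open>E(U\<^sub>i | \<F>\<^sub>m)\<close> at a fixed sample point, so \<open>c i i = u\<^sub>i\<close> by adaptedness.
\<close>
lemma sum_eq_telescoping_projections:
  fixes u :: "nat \<Rightarrow> real" and c :: "nat \<Rightarrow> nat \<Rightarrow> real"
  assumes diag: "\<And>i. i \<ge> 1 \<Longrightarrow> c i i = u i"
  shows "(\<Sum>i=1..p + k + 1. u i) = (\<Sum>i=1..k. u i)
    + (\<Sum>j<k. \<Sum>t\<le>p. c (t + k + 1 - j) (t + k + 1) - c (t + k - j) (t + k + 1))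
    + (\<Sum>t\<le>p. c (t + 1) (t + k + 1))"
proof -
  have u_eq: "u (t + k + 1) = c (t + 1) (t + k + 1)
      + (\<Sum>j<k. c (t + k + 1 - j) (t + k + 1) - c (t + k - j) (t + k + 1))" for t
  proof -
    have "(\<Sum>j<k. c (t + k + 1 - j) (t + k + 1) - c (t + k - j) (t + k + 1))
        = (\<Sum>j<k. c (t + k + 1 - j) (t + k + 1) - c (t + k + 1 - Suc j) (t + k + 1))"
      by (intro sum.cong) auto
    also have "\<dots> = c (t + k + 1) (t + k + 1) - c (t + 1) (t + k + 1)"
      by (subst sum_lessThan_telescope') simp
    finally show ?thesis
      using diag[of "t + k + 1"] by simp
  qed
  show ?thesis
    unfolding sum_atLeastAtMost_split_shift u_eq sum.distrib sum.swap[of _ "{..<k}"]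
    by (simp add: ac_simps)
qed

lemma sum_far_projections_le:
  fixes c :: "nat \<Rightarrow> nat \<Rightarrow> real" and a f :: "nat \<Rightarrow> real"
  assumes far: "\<And>m. m \<ge> 1 \<Longrightarrow> \<bar>c m (k + m)\<bar> \<le> f k * a (k + m)"
    and "f k \<ge> 0" and a: "\<And>i. a i \<ge> 0"
  shows "\<bar>\<Sum>t\<le>p. c (t + 1) (t + k + 1)\<bar> \<le> f k * (\<Sum>i=1..p + k + 1. a i)"
proof -
  have "\<bar>\<Sum>t\<le>p. c (t + 1) (t + k + 1)\<bar> \<le> (\<Sum>t\<le>p. f k * a (t + k + 1))"
    using far[of "t + 1" for t] by (intro order_trans[OF sum_abs] sum_mono) (simp add: ac_simps)
  also have "\<dots> = f k * (\<Sum>t\<le>p. a (t + k + 1))"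
    by (simp add: sum_distrib_left)
  also have "\<dots> \<le> f k * ((\<Sum>i=1..k. a i) + (\<Sum>t\<le>p. a (t + k + 1)))"
    using \<open>f k \<ge> 0\<close> a by (intro mult_left_mono) (auto intro: sum_nonneg)
  finally show ?thesis
    unfolding sum_atLeastAtMost_split_shift .
qed

lemma scaled_sum_offset_tendsto_zero:
  fixes X :: "nat \<Rightarrow> nat \<Rightarrow> real" and b :: "nat \<Rightarrow> real"
  assumes X: "\<And>j. j < k \<Longrightarrow> (\<lambda>p. X j p / b (p + k + 1)) \<longlonglongrightarrow> 0"
    and b_top: "filterlim b at_top sequentially"
  shows "(\<lambda>n. (A + (\<Sum>j<k. X j (n - k - 1))) / b n) \<longlonglongrightarrow> 0"
proof -
  have "filterlim (\<lambda>p. b (p + k + 1)) at_top sequentially"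
    using filterlim_compose[OF b_top filterlim_add_const_nat_at_top[of "k + 1"]]
    by (simp add: add.assoc)
  then have "(\<lambda>p. A / b (p + k + 1)) \<longlonglongrightarrow> 0"
    using tendsto_mult_right_zero[OF tendsto_inverse_0_at_top] by (simp add: divide_inverse)
  moreover have "(\<lambda>p. \<Sum>j<k. X j p / b (p + k + 1)) \<longlonglongrightarrow> 0"
    by (rule tendsto_null_sum) (use X in blast)
  ultimately have "(\<lambda>p. A / b (p + k + 1) + (\<Sum>j<k. X j p / b (p + k + 1))) \<longlonglongrightarrow> 0"
    by (rule tendsto_add_zero)
  then have "(\<lambda>p. (A + (\<Sum>j<k. X j (p + (k + 1) - k - 1))) / b (p + (k + 1))) \<longlonglongrightarrow> 0"
    by (simp add: add_divide_distrib sum_divide_distrib)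
  then show ?thesis
    by (rule LIMSEQ_offset)
qed

lemma scaled_sum_tendsto_zero_by_projections:
  fixes u a b f :: "nat \<Rightarrow> real" and c :: "nat \<Rightarrow> nat \<Rightarrow> real"
  assumes diag: "\<And>i. i \<ge> 1 \<Longrightarrow> c i i = u i"
    and increments: "\<And>k j. j < k \<Longrightarrow>
      (\<lambda>p. (\<Sum>t\<le>p. c (t + k + 1 - j) (t + k + 1) - c (t + k - j) (t + k + 1)) / b (p + k + 1))
        \<longlonglongrightarrow> 0"
    and far: "\<And>n m. n \<ge> N \<Longrightarrow> m \<ge> 1 \<Longrightarrow> \<bar>c m (n + m)\<bar> \<le> f n * a (n + m)"
    and f_nonneg: "\<And>n. n \<ge> N \<Longrightarrow> f n \<ge> 0" and f: "f \<longlonglongrightarrow> 0"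
    and a_nonneg: "\<And>i. a i \<ge> 0" and a_le: "\<And>n. n \<ge> 1 \<Longrightarrow> (\<Sum>i=1..n. a i) / b n \<le> C"
    and b_pos: "\<And>n. n \<ge> 1 \<Longrightarrow> b n > 0" and b_top: "filterlim b at_top sequentially"
  shows "(\<lambda>n. (\<Sum>i=1..n. u i) / b n) \<longlonglongrightarrow> 0"
proof -
  define X where
    "X k j p = (\<Sum>t\<le>p. c (t + k + 1 - j) (t + k + 1) - c (t + k - j) (t + k + 1))" for k j p
  define r where "r k n = ((\<Sum>i=1..k. u i) + (\<Sum>j<k. X k j (n - k - 1))) / b n" for k n
  show ?thesis
  proof (rule tendsto_zero_by_approximation[where K=N and r=r and e="\<lambda>k. f k * max C 0"])
    fix k
    assume "k \<ge> N"
    show "r k \<longlonglongrightarrow> 0"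
      unfolding r_def using increments
      by (intro scaled_sum_offset_tendsto_zero b_top) (simp add: X_def)
    show "eventually (\<lambda>n. \<bar>(\<Sum>i=1..n. u i) / b n - r k n\<bar> \<le> f k * max C 0) sequentially"
      unfolding eventually_sequentially
    proof (intro exI allI impI)
      fix n
      assume "n \<ge> k + 1"
      define p where "p = n - k - 1"
      have n: "n = p + k + 1"
        using \<open>n \<ge> k + 1\<close> by (simp add: p_def)
      have "\<bar>(\<Sum>i=1..n. u i) / b n - r k n\<bar> = \<bar>\<Sum>t\<le>p. c (t + 1) (t + k + 1)\<bar> / b n"
        using sum_eq_telescoping_projections[where c=c and u=u and p=p and k=k, OF diag] b_pos[of n] n
        by (simp add: r_def X_def p_def[symmetric] diff_divide_distrib[symmetric] abs_div)
      also have "\<dots> \<le> f k * ((\<Sum>i=1..n. a i) / b n)"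
        using sum_far_projections_le[where c=c and k=k and f=f and a=a and p=p,
            OF far[OF \<open>k \<ge> N\<close>] f_nonneg[OF \<open>k \<ge> N\<close>] a_nonneg] b_pos[of n]
        by (simp add: n divide_right_mono)
      also have "\<dots> \<le> f k * max C 0"
        using a_le[of n] n by (intro mult_left_mono f_nonneg \<open>k \<ge> N\<close>) auto
      finally show "\<bar>(\<Sum>i=1..n. u i) / b n - r k n\<bar> \<le> f k * max C 0" .
    qed
  qed (rule tendsto_mult_left_zero[OF f])
qed

lemma filtration_subalgebra:
  assumes "is_filtration M F" "1 \<le> n" "n \<le> m"
  shows "subalgebra (F m) (F n)"
  using assms unfolding is_filtration_def subalgebra_def by auto

lemma cond_exp_increments_martingale_difference:
  fixes X :: "nat \<Rightarrow> 'a \<Rightarrow> real"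
  assumes "prob_space M" and F: "is_filtration M F" and "a \<ge> 1"
    and X: "\<And>t. X t \<in> borel_measurable M" "\<And>t. integrable M (\<lambda>x. (X t x)\<^sup>2)"
  shows "martingale_difference M (\<lambda>t. F (t + a + 1))
    (\<lambda>t x. real_cond_exp M (F (t + a + 1)) (X t) x - real_cond_exp M (F (t + a)) (X t) x)"
proof -
  interpret prob_space M by fact
  have sub: "subalgebra M (F n)" if "n \<ge> 1" for n
    using F that by (simp add: is_filtration_def)
  show ?thesis
  proof
    fix t
    let ?G = "F (t + a + 1)" and ?X = "X (Suc t)"
    show "subalgebra M ?G" "sets ?G \<subseteq> sets (F (Suc t + a + 1))"
      using F \<open>a \<ge> 1\<close> by (auto simp: is_filtration_def)
    have "real_cond_exp M (F (t + a)) (X t) \<in> borel_measurable ?G"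
      using filtration_subalgebra[OF F, of "t + a" "t + a + 1"] \<open>a \<ge> 1\<close>
      by (intro measurable_from_subalg[OF _ borel_measurable_cond_exp]) auto
    then show "(\<lambda>x. real_cond_exp M ?G (X t) x - real_cond_exp M (F (t + a)) (X t) x)
        \<in> borel_measurable ?G"
      by measurable
    show "integrable M (\<lambda>x. (real_cond_exp M ?G (X t) x - real_cond_exp M (F (t + a)) (X t) x)\<^sup>2)"
      using \<open>a \<ge> 1\<close> by (intro integral_cond_exp_diff_square_le(1) sub X) auto
    show "AE x in M. real_cond_exp M ?G (\<lambda>x. real_cond_exp M (F (Suc t + a + 1)) ?X x
        - real_cond_exp M (F (Suc t + a)) ?X x) x = 0"
    proof -
      have "AE x in M. real_cond_exp M ?G (\<lambda>x. real_cond_exp M (F (Suc t + a + 1)) ?X x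
          - real_cond_exp M ?G ?X x) x = 0"
        using filtration_subalgebra[OF F, of "t + a + 1" "Suc t + a + 1"] \<open>a \<ge> 1\<close>
          square_integrable_imp_integrable[OF X]
        by (intro cond_exp_cond_exp_diff_eq_0 sub) auto
      then show ?thesis
        by simp
    qed
  qed
qed

lemma AE_cond_exp_increments_tendsto_zero:
  fixes U :: "nat \<Rightarrow> 'a \<Rightarrow> real" and b :: "nat \<Rightarrow> real"
  assumes "prob_space M" and F: "is_filtration M F" and "j < k"
    and U: "\<And>n. n \<ge> 1 \<Longrightarrow> U n \<in> borel_measurable M" "\<And>n. n \<ge> 1 \<Longrightarrow> integrable M (\<lambda>x. (U n x)\<^sup>2)"
    and b_pos: "\<And>n. n \<ge> 1 \<Longrightarrow> b n > 0" and b_mono: "\<And>n m. 1 \<le> n \<Longrightarrow> n \<le> m \<Longrightarrow> b n \<le> b m"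
    and b_top: "filterlim b at_top sequentially"
    and summable: "summable (\<lambda>n. (\<integral>x. (U (Suc n) x)\<^sup>2 \<partial>M) / (b (Suc n))\<^sup>2)"
  shows "AE x in M. (\<lambda>p. (\<Sum>t\<le>p. real_cond_exp M (F (t + k + 1 - j)) (U (t + k + 1)) x
    - real_cond_exp M (F (t + k - j)) (U (t + k + 1)) x) / b (p + k + 1)) \<longlonglongrightarrow> 0"
proof -
  interpret prob_space M by fact
  let ?D = "\<lambda>t x. real_cond_exp M (F (t + (k - j) + 1)) (U (t + k + 1)) x
    - real_cond_exp M (F (t + (k - j))) (U (t + k + 1)) x"
  interpret martingale_difference M "\<lambda>t. F (t + (k - j) + 1)" ?D
    using \<open>j < k\<close> by (intro cond_exp_increments_martingale_difference F U \<open>prob_space M\<close>) auto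
  have "summable (\<lambda>t. 4 * ((\<integral>x. (U (t + k + 1) x)\<^sup>2 \<partial>M) / (b (t + k + 1))\<^sup>2))"
    using summable_ignore_initial_segment[OF summable, of k] by (intro summable_mult) simp
  moreover have "norm ((\<integral>x. (?D t x)\<^sup>2 \<partial>M) / (b (t + k + 1))\<^sup>2)
      \<le> 4 * ((\<integral>x. (U (t + k + 1) x)\<^sup>2 \<partial>M) / (b (t + k + 1))\<^sup>2)" for t
    using integral_cond_exp_diff_square_le(2)[of "F (t + (k - j) + 1)" "F (t + (k - j))"
        "U (t + k + 1)"] F \<open>j < k\<close> U
    by (auto simp: is_filtration_def divide_right_mono)
  ultimately have "summable (\<lambda>t. (\<integral>x. (?D t x)\<^sup>2 \<partial>M) / (b (t + k + 1))\<^sup>2)"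
    by (rule summable_comparison_test')
  then have "AE x in M. (\<lambda>p. (\<Sum>t\<le>p. ?D t x) / b (p + k + 1)) \<longlonglongrightarrow> 0"
    using b_pos b_mono filterlim_compose[OF b_top filterlim_add_const_nat_at_top[of "k + 1"]]
    by (intro strong_law) (auto simp: incseq_def add.assoc)
  moreover have "t + (k - j) + 1 = t + k + 1 - j" "t + (k - j) = t + k - j" for t
    using \<open>j < k\<close> by auto
  ultimately show ?thesis
    by simp
qed

lemma star_submixingE:
  assumes "star_submixing M F U" and mean_zero: "\<And>n. n \<ge> 1 \<Longrightarrow> (\<integral>x. U n x \<partial>M) = 0"
  obtains N f where "\<And>n. n \<ge> N \<Longrightarrow> f n \<ge> 0" "f \<longlonglongrightarrow> 0"
    and "AE x in M. \<forall>n m. n \<ge> N \<longrightarrow> m \<ge> 1 \<longrightarrow>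
      \<bar>real_cond_exp M (F m) (U (n + m)) x\<bar> \<le> f n * (\<integral>y. \<bar>U (n + m) y\<bar> \<partial>M)"
proof -
  obtain N f where f_nonneg: "\<And>n. n \<ge> N \<Longrightarrow> f n \<ge> 0" and f: "f \<longlonglongrightarrow> 0"
    and mixing: "\<And>n m. n \<ge> N \<Longrightarrow> m \<ge> 1 \<Longrightarrow>
      AE x in M. \<bar>real_cond_exp M (F m) (U (n + m)) x - (\<integral>y. U (n + m) y \<partial>M)\<bar>
        \<le> f n * (\<integral>y. \<bar>U (n + m) y\<bar> \<partial>M)"
    using assms(1) unfolding star_submixing_def by blast
  have "AE x in M. \<forall>n m. n \<ge> N \<longrightarrow> m \<ge> 1 \<longrightarrow>
      \<bar>real_cond_exp M (F m) (U (n + m)) x\<bar> \<le> f n * (\<integral>y. \<bar>U (n + m) y\<bar> \<partial>M)"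
    using mixing mean_zero by (auto simp: AE_all_countable intro: AE_mp[OF _ AE_I2])
  with f_nonneg f show ?thesis
    by (rule that)
qed

lemma AE_cond_exp_adapted:
  assumes "prob_space M" "is_filtration M F"
    and adapted: "\<And>n. n \<ge> 1 \<Longrightarrow> U n \<in> borel_measurable (F n)"
    and integrable: "\<And>n. n \<ge> 1 \<Longrightarrow> integrable M (U n)"
  shows "AE x in M. \<forall>n\<ge>1. real_cond_exp M (F n) (U n) x = U n x"
  unfolding AE_all_countable
proof (intro allI)
  fix n :: nat
  show "AE x in M. n \<ge> 1 \<longrightarrow> real_cond_exp M (F n) (U n) x = U n x"
  proof (cases "n \<ge> 1")
    case True
    interpret sigma_finite_subalgebra M "F n"
      using assms(2) True by (intro prob_space.sigma_finite_subalgebra[OF assms(1)])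
        (simp add: is_filtration_def)
    show ?thesis
      using real_cond_exp_F_meas[OF integrable adapted, OF True True] by auto
  qed simp
qed

theorem lemma12:
  fixes M :: "'a measure" and F :: "nat \<Rightarrow> 'a measure"
    and U :: "nat \<Rightarrow> 'a \<Rightarrow> real" and b :: "nat \<Rightarrow> real"
  assumes "prob_space M"
    and "is_filtration M F"
    and "star_submixing M F U"
    and "\<And>n. n \<ge> 1 \<Longrightarrow> integrable M (U n)"
    and "\<And>n. n \<ge> 1 \<Longrightarrow> (\<integral>x. U n x \<partial>M) = 0"
    and "\<And>n. n \<ge> 1 \<Longrightarrow> integrable M (\<lambda>x. (U n x)\<^sup>2)"
    and "\<And>n. n \<ge> 1 \<Longrightarrow> b n > 0"
    and "\<And>n m. 1 \<le> n \<Longrightarrow> n \<le> m \<Longrightarrow> b n \<le> b m"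
    and "filterlim b at_top sequentially"
    and "summable (\<lambda>n. (\<integral>x. (U (Suc n) x)\<^sup>2 \<partial>M) / (b (Suc n))\<^sup>2)"
    and "bdd_above ((\<lambda>n. (\<Sum>i=1..n. \<integral>x. \<bar>U i x\<bar> \<partial>M) / b n) ` {1..})"
  shows "AE x in M. (\<lambda>n. (\<Sum>i=1..n. U i x) / b n) \<longlonglongrightarrow> 0"
proof -
  have adapted: "\<And>n. n \<ge> 1 \<Longrightarrow> U n \<in> borel_measurable (F n)"
    using assms(3) by (simp add: star_submixing_def)
  then have U_measurable: "\<And>n. n \<ge> 1 \<Longrightarrow> U n \<in> borel_measurable M"
    using assms(2) by (auto simp: is_filtration_def intro: measurable_from_subalg)
  obtain N f where f_nonneg: "\<And>n. n \<ge> N \<Longrightarrow> f n \<ge> 0" and f: "f \<longlonglongrightarrow> 0"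
    and far: "AE x in M. \<forall>n m. n \<ge> N \<longrightarrow> m \<ge> 1 \<longrightarrow>
      \<bar>real_cond_exp M (F m) (U (n + m)) x\<bar> \<le> f n * (\<integral>y. \<bar>U (n + m) y\<bar> \<partial>M)"
    using star_submixingE[OF assms(3,5)] by blast
  obtain C where C: "\<And>n. n \<ge> 1 \<Longrightarrow> (\<Sum>i=1..n. \<integral>x. \<bar>U i x\<bar> \<partial>M) / b n \<le> C"
    using assms(11) by (auto simp: bdd_above_def)
  have diag: "AE x in M. \<forall>n\<ge>1. real_cond_exp M (F n) (U n) x = U n x"
    using adapted assms(4) by (intro AE_cond_exp_adapted assms(1,2))
  have "AE x in M. \<forall>k j. j < k \<longrightarrow> (\<lambda>p. (\<Sum>t\<le>p. real_cond_exp M (F (t + k + 1 - j)) (U (t + k + 1)) x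
      - real_cond_exp M (F (t + k - j)) (U (t + k + 1)) x) / b (p + k + 1)) \<longlonglongrightarrow> 0"
    unfolding AE_all_countable using U_measurable assms
    by (intro allI AE_impI AE_cond_exp_increments_tendsto_zero) auto
  with diag far show ?thesis
  proof eventually_elim
    case (elim x)
    show ?case
      by (rule scaled_sum_tendsto_zero_by_projections[where c="\<lambda>m i. real_cond_exp M (F m) (U i) x"])
        (use elim f_nonneg f C assms(7,9) in auto)
  qed
qed

end
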